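(* Let $\Gamma>0$, $\lambda>0$, $a>0$ and $C$ be real numbers with $0\le C<2a\lambda^2$. Let $f\in L^1(\mathbb{R})$ satisfy $|f(\xi)|\le Ce^{-a|\xi|}$ for all $|\xi|\le\sqrt2\lambda$, and let $v\in L^1(\mathbb{R})$ satisfy $|v(\xi)|\le\Gamma e^{-a|\xi|}$ for all $\xi\in\mathbb{R}$. Then for all $\xi\in\mathbb{R}$, $$|R[f](\xi)|\le e^{-a|\xi|}\left(\frac{C^2}{\lambda^2}\cdot\frac{1+a|\xi|}{a}\left(\frac18+\frac1{2\pi}\exp\!\left(\frac{C}{4\pi\lambda^2a}\right)\exp\!\left(\frac{C}{4\pi\lambda^2}|\xi|\right)\right)+\Gamma\right).$$
   Context: Fix an infinitely differentiable $b:\mathbb{R}\to[0,1]$ with $b(\xi)=1$ for $|\xi|\le\lambda$ and $b(\xi)=0$ for $|\xi|\ge\sqrt2\lambda$. Convolution is normalized: $f*g(\xi)=\frac1{2\pi}\int f(\eta)g(\xi-\eta)\,d\eta$; $f^{*m}$ is the $m$-fold convolution. For $f\in L^1$: $W_b[f](\xi)=f(\xi)\frac{b(\xi)}{4\lambda^2-\xi^2}$, $\widetilde W_b[f](\xi)=f(\xi)\frac{i\xi\,b(\xi)}{4\lambda^2-\xi^2}$, $\exp_2^*[f]=\sum_{m\ge2}\frac{f^{*m}}{m!}$, and $R[f]=\frac14\widetilde W_b[f]*\widetilde W_b[f]-4\lambda^2\exp_2^*[W_b[f]]+v$. *)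

theory Defs
  imports "HOL-Analysis.Analysis"
begin

definition smooth_real :: "(real \<Rightarrow> real) \<Rightarrow> bool" where
  "smooth_real g \<longleftrightarrow> (\<forall>k. \<forall>x. ((deriv ^^ k) g) differentiable (at x))"

definition nconv :: "(real \<Rightarrow> complex) \<Rightarrow> (real \<Rightarrow> complex) \<Rightarrow> real \<Rightarrow> complex" where
  "nconv f g \<xi> = complex_of_real (1 / (2 * pi)) * (LINT \<eta>|lborel. f \<eta> * g (\<xi> - \<eta>))"

text \<open>m-fold convolution power (meaningful for m >= 1; the 0 case is unused).\<close>
fun conv_power :: "(real \<Rightarrow> complex) \<Rightarrow> nat \<Rightarrow> real \<Rightarrow> complex" where
  "conv_power f 0 = (\<lambda>_. 0)"
| "conv_power f (Suc 0) = f"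
| "conv_power f (Suc (Suc n)) = nconv f (conv_power f (Suc n))"

definition W_b :: "(real \<Rightarrow> real) \<Rightarrow> real \<Rightarrow> (real \<Rightarrow> complex) \<Rightarrow> real \<Rightarrow> complex" where
  "W_b b lam f \<xi> = f \<xi> * complex_of_real (b \<xi> / (4 * lam\<^sup>2 - \<xi>\<^sup>2))"

definition W_b_tilde :: "(real \<Rightarrow> real) \<Rightarrow> real \<Rightarrow> (real \<Rightarrow> complex) \<Rightarrow> real \<Rightarrow> complex" where
  "W_b_tilde b lam f \<xi> = f \<xi> * (\<i> * complex_of_real (\<xi> * b \<xi> / (4 * lam\<^sup>2 - \<xi>\<^sup>2)))"

definition exp2_star :: "(real \<Rightarrow> complex) \<Rightarrow> real \<Rightarrow> complex" where
  "exp2_star f \<xi> = (\<Sum>n. conv_power f (n + 2) \<xi> / of_nat (fact (n + 2)))"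

definition R_op :: "(real \<Rightarrow> real) \<Rightarrow> real \<Rightarrow> (real \<Rightarrow> complex) \<Rightarrow> (real \<Rightarrow> complex) \<Rightarrow> real \<Rightarrow> complex" where
  "R_op b lam v f \<xi> =
     (1/4) * nconv (W_b_tilde b lam f) (W_b_tilde b lam f) \<xi>
     - complex_of_real (4 * lam\<^sup>2) * exp2_star (W_b b lam f) \<xi> + v \<xi>"

end

theory Submission
  imports Defs "HOL-Real_Asymp.Real_Asymp"
begin

(* Write g = W_b[f] and g~ = W~_b[f].  Since b vanishes for |xi| >= sqrt 2 lam
   and 4 lam^2 - xi^2 > 2 lam^2 below that threshold, both are dominated by exponentials:
   |g| <= K e^{-a|xi|} with K = C/(2 lam^2) and |g~| <= K~ e^{-a|xi|} with K~ = C/(sqrt 2 lam).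
   Convolving e^{-a|.|} with e^{-a|.|} phi_n(|.|), where phi_n is the polynomial weight
   phi_n(y) = sum_{k<n} a^{-(n-1-k)} y^k/k!, produces e^{-a|xi|} (phi_{n+1} + phi_n/a),
   which is at most 2 e^{-a|xi|} phi_{n+1}.  By induction the m-fold convolution power of g
   is bounded by K (K/pi)^{m-1} e^{-a|xi|} phi_m(|xi|).  Summing these bounds against 1/m!
   (a Cauchy-product estimate, using K/(pi a) < 1/3, which is where C < 2 a lam^2 enters)
   controls exp_2^*[g]; the case n = 1 controls g~ * g~, and v is bounded by hypothesis. *)

text \<open>With c = 1/a they measure how iterated convolution of
  exp(-a|xi|) with itself degrades the exponential decay.\<close>
fun conv_weight :: "real \<Rightarrow> nat \<Rightarrow> real \<Rightarrow> real" where
  "conv_weight c 0 y = 0"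
| "conv_weight c (Suc n) y = c * conv_weight c n y + y ^ n / fact n"

lemma conv_weight_deriv: "(conv_weight c (Suc n) has_real_derivative conv_weight c n y) (at y)"
proof (induction n arbitrary: y)
  case 0
  show ?case by (auto intro!: derivative_eq_intros)
next
  case (Suc n)
  have "((\<lambda>y. y ^ Suc n / fact (Suc n)) has_real_derivative (of_nat (Suc n) * y ^ n) / fact (Suc n)) (at y)"
    using DERIV_cdivide[OF DERIV_pow[of "Suc n" y UNIV], of "fact (Suc n)"] by simp
  from DERIV_add[OF DERIV_cmult[OF Suc.IH] this]
  have "((\<lambda>y. c * conv_weight c (Suc n) y + y ^ Suc n / fact (Suc n)) has_real_derivative
        c * conv_weight c n y + (of_nat (Suc n) * y ^ n) / fact (Suc n)) (at y)" .
  moreover have "(of_nat (Suc n) * y ^ n) / fact (Suc n) = y ^ n / (fact n :: real)"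
    by (simp add: fact_Suc del: of_nat_Suc)
  ultimately show ?case by simp
qed

lemma conv_weight_continuous: "continuous_on UNIV (conv_weight c n)"
proof (cases n)
  case (Suc m)
  show ?thesis unfolding Suc
    by (intro continuous_at_imp_continuous_on ballI DERIV_isCont[OF conv_weight_deriv])
qed simp

lemma conv_weight_measurable[measurable]: "conv_weight c n \<in> borel_measurable borel"
  by (rule borel_measurable_continuous_onI[OF conv_weight_continuous])

lemma conv_weight_nonneg: "c \<ge> 0 \<Longrightarrow> y \<ge> 0 \<Longrightarrow> conv_weight c n y \<ge> 0"
  by (induction n) auto

lemma conv_weight_Suc_zero: "n \<ge> 1 \<Longrightarrow> conv_weight c (Suc n) 0 = c * conv_weight c n 0"
  by (cases n) auto

lemma conv_weight_mono:
  assumes "c \<ge> 0" "0 \<le> y" "y \<le> z"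
  shows "conv_weight c n y \<le> conv_weight c n z"
proof (cases n)
  case (Suc m)
  have "conv_weight c (Suc m) y \<le> conv_weight c (Suc m) z"
  proof (rule DERIV_nonneg_imp_nondecreasing[OF assms(3)])
    fix x assume "y \<le> x" "x \<le> z"
    then show "\<exists>d. (conv_weight c (Suc m) has_real_derivative d) (at x) \<and> 0 \<le> d"
      using assms by (intro exI[of _ "conv_weight c m x"] conjI conv_weight_deriv conv_weight_nonneg) auto
  qed
  then show ?thesis using Suc by simp
qed simp

text \<open>For c = 1/a the weights grow at most like exp(a t): the function
  t |-> phi_n(y + t) exp(-a t) is non-increasing, because phi_n' = phi_(n-1) <= a phi_n.\<close>
lemma conv_weight_shift:
  assumes a: "a > 0" and y: "y \<ge> 0" and t: "t \<ge> 0"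
  shows "conv_weight (1/a) n (y + t) \<le> conv_weight (1/a) n y * exp (a * t)"
proof (cases n)
  case (Suc m)
  let ?p = "conv_weight (1/a)"
  define h where "h s = ?p (Suc m) (y + s) * exp (- a * s)" for s
  have "h t \<le> h 0"
  proof (rule DERIV_nonpos_imp_nonincreasing[OF t])
    fix s assume s: "0 \<le> s" "s \<le> t"
    let ?d = "?p m (y + s) * exp (- a * s) + ?p (Suc m) (y + s) * (exp (- a * s) * (- a))"
    have "((\<lambda>s. ?p (Suc m) (y + s)) has_real_derivative ?p m (y + s) * 1) (at s)"
      by (rule DERIV_chain2[OF conv_weight_deriv]) (auto intro!: derivative_eq_intros)
    then have deriv: "(h has_real_derivative ?d) (at s)"
      unfolding h_def by (intro DERIV_mult[THEN DERIV_cong]) (auto intro!: derivative_eq_intros)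
    have "?p m (y + s) \<le> a * ?p (Suc m) (y + s)"
    proof -
      have "a * ?p (Suc m) (y + s) = ?p m (y + s) + a * ((y + s) ^ m / fact m)"
        using a by (simp add: algebra_simps)
      moreover have "a * ((y + s) ^ m / fact m) \<ge> 0" using a y s by simp
      ultimately show ?thesis by linarith
    qed
    then have "exp (- a * s) * (?p m (y + s) - a * ?p (Suc m) (y + s)) \<le> 0"
      by (intro mult_nonneg_nonpos) auto
    moreover have "?d = exp (- a * s) * (?p m (y + s) - a * ?p (Suc m) (y + s))"
      by (simp only: algebra_simps)
    ultimately have "?d \<le> 0" by simp
    with deriv show "\<exists>d. (h has_real_derivative d) (at s) \<and> d \<le> 0" by blast
  qed
  then have "?p (Suc m) (y + t) * exp (- a * t) * exp (a * t) \<le> ?p (Suc m) y * exp (a * t)"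
    unfolding h_def by (intro mult_right_mono) simp_all
  then show ?thesis using Suc by (simp add: mult.assoc flip: exp_add)
qed simp

lemma conv_weight_sum: "conv_weight c n y = (\<Sum>k<n. c ^ (n - 1 - k) * y ^ k / fact k)"
proof (induction n)
  case (Suc n)
  have "conv_weight c (Suc n) y = (\<Sum>k<n. c * (c ^ (n - 1 - k) * y ^ k / fact k)) + y ^ n / fact n"
    by (simp add: Suc sum_distrib_left)
  also have "(\<Sum>k<n. c * (c ^ (n - 1 - k) * y ^ k / fact k)) = (\<Sum>k<n. c ^ (Suc n - 1 - k) * y ^ k / fact k)"
    by (intro sum.cong refl) (auto simp: Suc_diff_Suc power_Suc[symmetric] simp del: power_Suc)
  finally show ?case by simp
qed simp

definition conv_kernel :: "real \<Rightarrow> nat \<Rightarrow> real \<Rightarrow> real \<Rightarrow> real" where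
  "conv_kernel a n \<xi> \<eta> = exp (- a * \<bar>\<eta>\<bar>) * exp (- a * \<bar>\<xi> - \<eta>\<bar>) * conv_weight (1/a) n \<bar>\<xi> - \<eta>\<bar>"

lemma conv_kernel_measurable[measurable]: "conv_kernel a n \<xi> \<in> borel_measurable borel"
  unfolding conv_kernel_def by measurable

lemma exp_tail_nn_integral:
  assumes a: "a > 0" and k: "k \<ge> 0"
  shows "(\<integral>\<^sup>+\<eta>. ennreal (k * exp (- a * (\<eta> - t))) * indicator {t..} \<eta> \<partial>lborel) = ennreal (k / a)"
proof -
  have "(\<integral>\<^sup>+\<eta>. ennreal (k * exp (- a * (\<eta> - t))) * indicator {t..} \<eta> \<partial>lborel)
      = ennreal (0 - (- (k / a) * exp (- a * (t - t))))"
  proof (rule nn_integral_FTC_atLeast[where F="\<lambda>\<eta>. - (k / a) * exp (- a * (\<eta> - t))" and T=0])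
    fix x :: real assume "t \<le> x"
    show "((\<lambda>\<eta>. - (k / a) * exp (- a * (\<eta> - t))) has_real_derivative k * exp (- a * (x - t))) (at x)"
      using a by (auto intro!: derivative_eq_intros simp: field_simps)
    show "0 \<le> k * exp (- a * (x - t))" using k by simp
  next
    show "((\<lambda>\<eta>. - (k / a) * exp (- a * (\<eta> - t))) \<longlongrightarrow> 0) at_top"
      using a by real_asymp
  qed measurable
  then show ?thesis by simp
qed

text \<open>For xi >= 0 the kernel is dominated piecewise: on (-oo, 0] and [xi, oo) by exponential
  tails (via the growth bound for phi_n), and on [0, xi] it equals exp(-a xi) phi_n(xi - eta).\<close>
lemma conv_kernel_le_pieces:
  fixes n :: nat
  assumes a: "a > 0" and xi: "\<xi> \<ge> 0"
  defines "e \<equiv> exp (- a * \<xi>)" and "p \<equiv> conv_weight (1/a) n"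
  shows "ennreal (conv_kernel a n \<xi> \<eta>)
     \<le> ennreal (e * p \<xi> * exp (- a * (- \<eta> - 0))) * indicator {..0} \<eta>
      + ennreal (e * p (\<xi> - \<eta>)) * indicator {0..\<xi>} \<eta>
      + ennreal (e * p 0 * exp (- a * (\<eta> - \<xi>))) * indicator {\<xi>..} \<eta>"
    (is "_ \<le> ?left + ?mid + ?right")
proof -
  consider "\<eta> \<le> 0" | "0 \<le> \<eta>" "\<eta> \<le> \<xi>" | "\<xi> \<le> \<eta>" by linarith
  then show ?thesis
  proof cases
    case 1
    have "p (\<xi> + (- \<eta>)) \<le> p \<xi> * exp (a * (- \<eta>))"
      unfolding p_def using 1 xi a by (intro conv_weight_shift) auto
    then have "conv_kernel a n \<xi> \<eta> \<le> exp (a * \<eta>) * exp (- a * (\<xi> - \<eta>)) * (p \<xi> * exp (a * (- \<eta>)))"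
      unfolding conv_kernel_def p_def using 1 xi by (auto intro!: mult_left_mono simp: abs_of_nonpos)
    also have "\<dots> = e * p \<xi> * exp (- a * (- \<eta> - 0))"
      unfolding e_def by (simp add: algebra_simps flip: exp_add)
    finally have "ennreal (conv_kernel a n \<xi> \<eta>) \<le> ?left"
      using 1 by (simp add: indicator_def ennreal_leI)
    then show ?thesis by (intro add_increasing2[OF zero_le])
  next
    case 2
    have "conv_kernel a n \<xi> \<eta> = e * p (\<xi> - \<eta>)"
      unfolding conv_kernel_def p_def e_def using 2 by (simp add: algebra_simps flip: exp_add)
    then have "ennreal (conv_kernel a n \<xi> \<eta>) \<le> ?mid"
      using 2 by (simp add: indicator_def)
    then show ?thesis by (intro add_increasing2[OF zero_le] add_increasing[OF zero_le])
  next
    case 3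
    have "p (0 + (\<eta> - \<xi>)) \<le> p 0 * exp (a * (\<eta> - \<xi>))"
      unfolding p_def using 3 a by (intro conv_weight_shift) auto
    then have "conv_kernel a n \<xi> \<eta> \<le> exp (- a * \<eta>) * exp (- a * (\<eta> - \<xi>)) * (p 0 * exp (a * (\<eta> - \<xi>)))"
      unfolding conv_kernel_def p_def using 3 xi by (auto intro!: mult_left_mono)
    also have "\<dots> = e * p 0 * exp (- a * (\<eta> - \<xi>))"
      unfolding e_def by (simp add: algebra_simps flip: exp_add)
    finally have "ennreal (conv_kernel a n \<xi> \<eta>) \<le> ?right"
      using 3 by (simp add: indicator_def ennreal_leI)
    then show ?thesis by (intro add_increasing[OF zero_le])
  qed
qed

text \<open>The basic convolution estimate, for xi >= 0: integrating the three pieces gives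
  exp(-a xi) (phi_n(xi)/a + (phi_(n+1)(xi) - phi_(n+1)(0)) + phi_n(0)/a), and the
  boundary terms cancel since phi_(n+1)(0) = phi_n(0)/a.\<close>
lemma conv_kernel_integral_nonneg:
  assumes a: "a > 0" and n: "n \<ge> 1" and xi: "\<xi> \<ge> 0"
  shows "(\<integral>\<^sup>+\<eta>. ennreal (conv_kernel a n \<xi> \<eta>) \<partial>lborel)
     \<le> ennreal (exp (- a * \<xi>) * (conv_weight (1/a) (Suc n) \<xi> + (1/a) * conv_weight (1/a) n \<xi>))"
proof -
  define e where "e = exp (- a * \<xi>)"
  define p where "p = conv_weight (1/a)"
  define L where "L \<eta> = ennreal (e * p n \<xi> * exp (- a * (- \<eta> - 0))) * indicator {..0} \<eta>" for \<eta>
  define M where "M \<eta> = ennreal (e * p n (\<xi> - \<eta>)) * indicator {0..\<xi>} \<eta>" for \<eta>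
  define R where "R \<eta> = ennreal (e * p n 0 * exp (- a * (\<eta> - \<xi>))) * indicator {\<xi>..} \<eta>" for \<eta>
  have [measurable]: "L \<in> borel_measurable borel" "M \<in> borel_measurable borel" "R \<in> borel_measurable borel"
    unfolding L_def M_def R_def p_def by measurable
  have e: "e > 0" unfolding e_def by simp
  have p_nonneg: "y \<ge> 0 \<Longrightarrow> p m y \<ge> 0" for m y unfolding p_def using a by (intro conv_weight_nonneg) auto
  have IL: "integral\<^sup>N lborel L = ennreal (e * p n \<xi> / a)"
  proof -
    have "integral\<^sup>N lborel L = (\<integral>\<^sup>+\<eta>. ennreal (e * p n \<xi> * exp (- a * (\<eta> - 0))) * indicator {0..} \<eta> \<partial>lborel)"
      unfolding L_def
      using nn_integral_real_affine[of "\<lambda>\<eta>. ennreal (e * p n \<xi> * exp (- a * (- \<eta> - 0))) * indicator {..0} \<eta>" "-1" 0]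
      by (simp add: indicator_def)
    also have "\<dots> = ennreal (e * p n \<xi> / a)"
      using a e p_nonneg[of \<xi> n] xi by (intro exp_tail_nn_integral) auto
    finally show ?thesis .
  qed
  have IM: "integral\<^sup>N lborel M = ennreal ((- (e * p (Suc n) (\<xi> - \<xi>))) - (- (e * p (Suc n) (\<xi> - 0))))"
    unfolding M_def
  proof (rule nn_integral_FTC_Icc[where F="\<lambda>\<eta>. - (e * p (Suc n) (\<xi> - \<eta>))"])
    fix x assume x: "x \<in> {0..\<xi>}"
    have "((\<lambda>\<eta>. p (Suc n) (\<xi> - \<eta>)) has_real_derivative p n (\<xi> - x) * (- 1)) (at x)"
      unfolding p_def by (rule DERIV_chain2[OF conv_weight_deriv]) (auto intro!: derivative_eq_intros)
    then show "((\<lambda>\<eta>. - (e * p (Suc n) (\<xi> - \<eta>))) has_real_derivative e * p n (\<xi> - x)) (at x)"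
      by (auto intro!: derivative_eq_intros)
    show "0 \<le> e * p n (\<xi> - x)" using x e p_nonneg[of "\<xi> - x" n] by auto
  qed (use xi in \<open>auto simp: p_def\<close>)
  have IR: "integral\<^sup>N lborel R = ennreal (e * p n 0 / a)"
    unfolding R_def using a e p_nonneg[of 0 n] by (intro exp_tail_nn_integral) auto
  have mono: "p (Suc n) 0 \<le> p (Suc n) \<xi>" unfolding p_def using a xi by (intro conv_weight_mono) auto
  have "(\<integral>\<^sup>+\<eta>. ennreal (conv_kernel a n \<xi> \<eta>) \<partial>lborel) \<le> (\<integral>\<^sup>+\<eta>. L \<eta> + M \<eta> + R \<eta> \<partial>lborel)"
    unfolding L_def M_def R_def e_def p_def by (intro nn_integral_mono conv_kernel_le_pieces[OF a xi])
  also have "\<dots> = integral\<^sup>N lborel L + integral\<^sup>N lborel M + integral\<^sup>N lborel R"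
    by (simp add: nn_integral_add)
  also have "\<dots> = ennreal (e * p n \<xi> / a + (e * p (Suc n) \<xi> - e * p (Suc n) 0) + e * p n 0 / a)"
    unfolding IL IM IR using mono e p_nonneg[of \<xi> n] p_nonneg[of 0 n] a xi by (simp add: ennreal_plus)
  also have "e * p n \<xi> / a + (e * p (Suc n) \<xi> - e * p (Suc n) 0) + e * p n 0 / a
      = exp (- a * \<xi>) * (conv_weight (1/a) (Suc n) \<xi> + (1/a) * conv_weight (1/a) n \<xi>)"
    using conv_weight_Suc_zero[OF n, of "1/a"]
    by (simp add: e_def p_def field_simps del: conv_weight.simps)
  finally show ?thesis .
qed

text \<open>By the reflection eta |-> -eta the estimate holds at every xi, with |xi| in place of xi.\<close>
lemma conv_kernel_integral:
  assumes a: "a > 0" and n: "n \<ge> 1"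
  shows "(\<integral>\<^sup>+\<eta>. ennreal (conv_kernel a n \<xi> \<eta>) \<partial>lborel)
     \<le> ennreal (exp (- a * \<bar>\<xi>\<bar>) * (conv_weight (1/a) (Suc n) \<bar>\<xi>\<bar> + (1/a) * conv_weight (1/a) n \<bar>\<xi>\<bar>))"
proof (cases "\<xi> \<ge> 0")
  case True
  then show ?thesis using conv_kernel_integral_nonneg[OF a n True] by simp
next
  case False
  have "(\<integral>\<^sup>+\<eta>. ennreal (conv_kernel a n \<xi> \<eta>) \<partial>lborel)
      = (\<integral>\<^sup>+\<eta>. ennreal (conv_kernel a n \<xi> (0 + -1 * \<eta>)) \<partial>lborel)"
    using nn_integral_real_affine[of "\<lambda>\<eta>. ennreal (conv_kernel a n \<xi> \<eta>)" "-1" 0] by simp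
  also have "\<dots> = (\<integral>\<^sup>+\<eta>. ennreal (conv_kernel a n (- \<xi>) \<eta>) \<partial>lborel)"
    by (intro nn_integral_cong) (simp add: conv_kernel_def abs_minus_commute add.commute)
  also have "\<dots> \<le> ennreal (exp (- a * (- \<xi>)) * (conv_weight (1/a) (Suc n) (- \<xi>) + (1/a) * conv_weight (1/a) n (- \<xi>)))"
    using False by (intro conv_kernel_integral_nonneg[OF a n]) auto
  finally show ?thesis using False by simp
qed

text \<open>When the integrand is not
  integrable the normalized convolution is 0 and the bound is trivial.\<close>
lemma nconv_norm_le:
  fixes g h :: "real \<Rightarrow> complex"
  assumes a: "a > 0" and n: "n \<ge> 1" and K: "K \<ge> 0" and M: "M \<ge> 0"
    and g_le: "\<And>\<eta>. norm (g \<eta>) \<le> K * exp (- a * \<bar>\<eta>\<bar>)"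
    and h_le: "\<And>z. norm (h z) \<le> M * exp (- a * \<bar>z\<bar>) * conv_weight (1/a) n \<bar>z\<bar>"
  shows "norm (nconv g h \<xi>) \<le> 1 / (2 * pi) *
     (K * M * exp (- a * \<bar>\<xi>\<bar>) * (conv_weight (1/a) (Suc n) \<bar>\<xi>\<bar> + (1/a) * conv_weight (1/a) n \<bar>\<xi>\<bar>))"
proof -
  define B where "B = K * M * exp (- a * \<bar>\<xi>\<bar>) * (conv_weight (1/a) (Suc n) \<bar>\<xi>\<bar> + (1/a) * conv_weight (1/a) n \<bar>\<xi>\<bar>)"
  have B: "B \<ge> 0" unfolding B_def using K M a
    by (intro mult_nonneg_nonneg add_nonneg_nonneg conv_weight_nonneg) auto
  have "norm (LINT \<eta>|lborel. g \<eta> * h (\<xi> - \<eta>)) \<le> B"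
  proof (cases "integrable lborel (\<lambda>\<eta>. g \<eta> * h (\<xi> - \<eta>))")
    case True
    have "ennreal (norm (LINT \<eta>|lborel. g \<eta> * h (\<xi> - \<eta>))) \<le> (\<integral>\<^sup>+\<eta>. norm (g \<eta> * h (\<xi> - \<eta>)) \<partial>lborel)"
      by (rule integral_norm_bound_ennreal[OF True])
    also have "\<dots> \<le> (\<integral>\<^sup>+\<eta>. ennreal (K * M) * ennreal (conv_kernel a n \<xi> \<eta>) \<partial>lborel)"
    proof (intro nn_integral_mono)
      fix \<eta>
      have "norm (g \<eta> * h (\<xi> - \<eta>)) \<le> (K * exp (- a * \<bar>\<eta>\<bar>)) * (M * exp (- a * \<bar>\<xi> - \<eta>\<bar>) * conv_weight (1/a) n \<bar>\<xi> - \<eta>\<bar>)"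
        unfolding norm_mult by (intro mult_mono g_le h_le) (use K in auto)
      then show "ennreal (norm (g \<eta> * h (\<xi> - \<eta>))) \<le> ennreal (K * M) * ennreal (conv_kernel a n \<xi> \<eta>)"
        using K M by (simp add: conv_kernel_def ennreal_mult' [symmetric] ennreal_leI mult_ac)
    qed
    also have "\<dots> = ennreal (K * M) * (\<integral>\<^sup>+\<eta>. ennreal (conv_kernel a n \<xi> \<eta>) \<partial>lborel)"
      by (rule nn_integral_cmult) measurable
    also have "\<dots> \<le> ennreal (K * M) * ennreal (exp (- a * \<bar>\<xi>\<bar>) *
        (conv_weight (1/a) (Suc n) \<bar>\<xi>\<bar> + (1/a) * conv_weight (1/a) n \<bar>\<xi>\<bar>))"
      by (intro mult_left_mono conv_kernel_integral[OF a n]) simp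
    also have "\<dots> = ennreal B"
      using K M a unfolding B_def
      by (simp add: mult.assoc conv_weight_nonneg flip: ennreal_mult)
    finally show ?thesis using B by (simp add: ennreal_le_iff)
  next
    case False
    then show ?thesis using B by (simp add: not_integrable_integral_eq)
  qed
  moreover have "norm (nconv g h \<xi>) = norm (LINT \<eta>|lborel. g \<eta> * h (\<xi> - \<eta>)) / (2 * pi)"
    unfolding nconv_def by (simp add: norm_mult norm_divide)
  ultimately show ?thesis unfolding B_def by (simp add: divide_right_mono)
qed

lemma cutoff_denominator:
  fixes lam \<eta> :: real
  assumes lam: "lam > 0" and lt: "\<bar>\<eta>\<bar> < sqrt 2 * lam"
  shows "2 * lam\<^sup>2 < 4 * lam\<^sup>2 - \<eta>\<^sup>2" and "\<bar>\<eta>\<bar> * (sqrt 2 * lam) < 4 * lam\<^sup>2 - \<eta>\<^sup>2"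
proof -
  have "\<bar>\<eta>\<bar> * \<bar>\<eta>\<bar> < (sqrt 2 * lam) * (sqrt 2 * lam)"
    using lt by (intro mult_strict_mono) auto
  then show sq: "2 * lam\<^sup>2 < 4 * lam\<^sup>2 - \<eta>\<^sup>2" by (simp add: power2_eq_square algebra_simps)
  have "\<bar>\<eta>\<bar> * (sqrt 2 * lam) < (sqrt 2 * lam) * (sqrt 2 * lam)"
    using lt lam by (intro mult_strict_right_mono) auto
  then show "\<bar>\<eta>\<bar> * (sqrt 2 * lam) < 4 * lam\<^sup>2 - \<eta>\<^sup>2" using sq by (simp add: power2_eq_square algebra_simps)
qed

text \<open>The cut-off multiplier b/(4 lam^2 - xi^2) is at most 1/(2 lam^2), so W_b[f] inherits the
  exponential bound of f on the support of b.\<close>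
lemma W_b_norm_le:
  fixes f :: "real \<Rightarrow> complex"
  assumes lam: "lam > 0" and C: "C \<ge> 0"
    and b_range: "\<And>\<xi>. 0 \<le> b \<xi> \<and> b \<xi> \<le> 1"
    and b_zero: "\<And>\<xi>. \<bar>\<xi>\<bar> \<ge> sqrt 2 * lam \<Longrightarrow> b \<xi> = 0"
    and f_bound: "\<And>\<xi>. \<bar>\<xi>\<bar> \<le> sqrt 2 * lam \<Longrightarrow> norm (f \<xi>) \<le> C * exp (- a * \<bar>\<xi>\<bar>)"
  shows "norm (W_b b lam f \<eta>) \<le> C / (2 * lam\<^sup>2) * exp (- a * \<bar>\<eta>\<bar>)"
proof (cases "\<bar>\<eta>\<bar> \<ge> sqrt 2 * lam")
  case True
  then show ?thesis unfolding W_b_def using b_zero C by simp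
next
  case False
  then have lt: "\<bar>\<eta>\<bar> < sqrt 2 * lam" by simp
  have d: "2 * lam\<^sup>2 < 4 * lam\<^sup>2 - \<eta>\<^sup>2" by (rule cutoff_denominator[OF lam lt])
  have "0 < 2 * lam\<^sup>2" using lam by simp
  then have dp: "0 < 4 * lam\<^sup>2 - \<eta>\<^sup>2" using d by linarith
  have "\<bar>b \<eta> / (4 * lam\<^sup>2 - \<eta>\<^sup>2)\<bar> = b \<eta> / (4 * lam\<^sup>2 - \<eta>\<^sup>2)"
    using b_range[of \<eta>] by (simp add: abs_divide abs_of_pos[OF dp])
  also have "\<dots> \<le> 1 / (4 * lam\<^sup>2 - \<eta>\<^sup>2)"
    using b_range[of \<eta>] dp by (intro divide_right_mono) auto
  also have "\<dots> \<le> 1 / (2 * lam\<^sup>2)"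
    using d dp lam by (intro divide_left_mono) (auto intro: mult_pos_pos)
  finally have "\<bar>b \<eta> / (4 * lam\<^sup>2 - \<eta>\<^sup>2)\<bar> \<le> 1 / (2 * lam\<^sup>2)" .
  then have "norm (f \<eta>) * \<bar>b \<eta> / (4 * lam\<^sup>2 - \<eta>\<^sup>2)\<bar> \<le> (C * exp (- a * \<bar>\<eta>\<bar>)) * (1 / (2 * lam\<^sup>2))"
    using f_bound[of \<eta>] lt C by (intro mult_mono) auto
  moreover have "norm (W_b b lam f \<eta>) = norm (f \<eta>) * \<bar>b \<eta> / (4 * lam\<^sup>2 - \<eta>\<^sup>2)\<bar>"
    unfolding W_b_def by (simp only: norm_mult norm_of_real)
  ultimately show ?thesis by simp
qed

text \<open>Likewise xi b/(4 lam^2 - xi^2) is at most 1/(sqrt 2 lam) in absolute value.\<close>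
lemma W_b_tilde_norm_le:
  fixes f :: "real \<Rightarrow> complex"
  assumes lam: "lam > 0" and C: "C \<ge> 0"
    and b_range: "\<And>\<xi>. 0 \<le> b \<xi> \<and> b \<xi> \<le> 1"
    and b_zero: "\<And>\<xi>. \<bar>\<xi>\<bar> \<ge> sqrt 2 * lam \<Longrightarrow> b \<xi> = 0"
    and f_bound: "\<And>\<xi>. \<bar>\<xi>\<bar> \<le> sqrt 2 * lam \<Longrightarrow> norm (f \<xi>) \<le> C * exp (- a * \<bar>\<xi>\<bar>)"
  shows "norm (W_b_tilde b lam f \<eta>) \<le> C / (sqrt 2 * lam) * exp (- a * \<bar>\<eta>\<bar>)"
proof (cases "\<bar>\<eta>\<bar> \<ge> sqrt 2 * lam")
  case True
  then show ?thesis unfolding W_b_tilde_def using b_zero C lam by simp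
next
  case False
  then have lt: "\<bar>\<eta>\<bar> < sqrt 2 * lam" by simp
  have d: "2 * lam\<^sup>2 < 4 * lam\<^sup>2 - \<eta>\<^sup>2" "\<bar>\<eta>\<bar> * (sqrt 2 * lam) < 4 * lam\<^sup>2 - \<eta>\<^sup>2"
    using cutoff_denominator[OF lam lt] by auto
  have "0 < 2 * lam\<^sup>2" using lam by simp
  then have dp: "0 < 4 * lam\<^sup>2 - \<eta>\<^sup>2" using d by linarith
  have "\<bar>\<eta> * b \<eta> / (4 * lam\<^sup>2 - \<eta>\<^sup>2)\<bar> = \<bar>\<eta>\<bar> * b \<eta> / (4 * lam\<^sup>2 - \<eta>\<^sup>2)"
    using b_range[of \<eta>] by (simp add: abs_mult abs_divide abs_of_pos[OF dp])
  also have "\<dots> \<le> \<bar>\<eta>\<bar> / (4 * lam\<^sup>2 - \<eta>\<^sup>2)"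
    using b_range[of \<eta>] dp by (intro divide_right_mono mult_left_le) auto
  also have "\<dots> \<le> 1 / (sqrt 2 * lam)"
    using d dp lam by (simp add: divide_simps mult.commute)
  finally have "\<bar>\<eta> * b \<eta> / (4 * lam\<^sup>2 - \<eta>\<^sup>2)\<bar> \<le> 1 / (sqrt 2 * lam)" .
  then have "norm (f \<eta>) * \<bar>\<eta> * b \<eta> / (4 * lam\<^sup>2 - \<eta>\<^sup>2)\<bar> \<le> (C * exp (- a * \<bar>\<eta>\<bar>)) * (1 / (sqrt 2 * lam))"
    using f_bound[of \<eta>] lt C by (intro mult_mono) auto
  moreover have "norm (W_b_tilde b lam f \<eta>) = norm (f \<eta>) * \<bar>\<eta> * b \<eta> / (4 * lam\<^sup>2 - \<eta>\<^sup>2)\<bar>"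
    unfolding W_b_tilde_def by (simp only: norm_mult norm_of_real) simp
  ultimately show ?thesis by simp
qed

text \<open>Iterating the convolution estimate: the m-fold convolution power of a function dominated
  by K exp(-a|eta|) is dominated by K (K/pi)^(m-1) exp(-a|z|) phi_m(|z|), using
  phi_(n+1) + phi_n/a <= 2 phi_(n+1) to absorb the lower-order term.\<close>
lemma conv_power_norm_le:
  fixes g :: "real \<Rightarrow> complex"
  assumes a: "a > 0" and K: "K \<ge> 0" and g_le: "\<And>\<eta>. norm (g \<eta>) \<le> K * exp (- a * \<bar>\<eta>\<bar>)"
  shows "norm (conv_power g (Suc n) z) \<le> K * (K / pi) ^ n * exp (- a * \<bar>z\<bar>) * conv_weight (1/a) (Suc n) \<bar>z\<bar>"
proof (induction n arbitrary: z)
  case 0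
  then show ?case using g_le[of z] by simp
next
  case (Suc n)
  let ?p = "conv_weight (1/a)"
  have "norm (conv_power g (Suc (Suc n)) z) = norm (nconv g (conv_power g (Suc n)) z)" by simp
  also have "\<dots> \<le> 1 / (2 * pi) * (K * (K * (K / pi) ^ n) * exp (- a * \<bar>z\<bar>) *
        (?p (Suc (Suc n)) \<bar>z\<bar> + (1/a) * ?p (Suc n) \<bar>z\<bar>))"
    using Suc.IH K by (intro nconv_norm_le[OF a _ K _ g_le]) (auto simp: mult.assoc)
  also have "\<dots> \<le> 1 / (2 * pi) * (K * (K * (K / pi) ^ n) * exp (- a * \<bar>z\<bar>) * (2 * ?p (Suc (Suc n)) \<bar>z\<bar>))"
  proof -
    have "(1/a) * ?p (Suc n) \<bar>z\<bar> \<le> ?p (Suc (Suc n)) \<bar>z\<bar>" by simp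
    then have "?p (Suc (Suc n)) \<bar>z\<bar> + (1/a) * ?p (Suc n) \<bar>z\<bar> \<le> 2 * ?p (Suc (Suc n)) \<bar>z\<bar>"
      by linarith
    then show ?thesis by (rule mult_left_mono[OF mult_left_mono]) (use K in simp_all)
  qed
  also have "\<dots> = K * (K / pi) ^ Suc n * exp (- a * \<bar>z\<bar>) * ?p (Suc (Suc n)) \<bar>z\<bar>"
    by (simp add: field_simps)
  finally show ?case .
qed

lemma fact_mult_fact_le: "fact m * fact k \<le> (fact (m + k) :: real)"
proof -
  have "fact m * fact k \<le> (fact (m + k) :: nat)"
    by (rule dvd_imp_le[OF fact_fact_dvd_fact fact_gt_zero])
  then show ?thesis by (metis of_nat_fact of_nat_mono of_nat_mult)
qed

text \<open>A lower bound on (i+1)! (i+2)! that turns the coefficients u_i of the series estimate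
  below into those of an exponential series.\<close>
lemma fact_Suc_mult_fact_ge: "i \<ge> 1 \<Longrightarrow> 6 * 2 ^ i * fact i \<le> (fact (i + 1) * fact (i + 2) :: real)"
proof -
  assume "i \<ge> 1"
  then have "6 * 2 ^ i * fact i \<le> (fact (i + 1) * fact (i + 2) :: nat)"
  proof (induction i rule: nat_induct_at_least)
    case (Suc i)
    have "6 * 2 ^ Suc i * fact (Suc i) = 2 * Suc i * (6 * 2 ^ i * fact i)" by (simp add: algebra_simps)
    also have "\<dots> \<le> 2 * Suc i * (fact (i + 1) * fact (i + 2))" by (intro mult_left_mono Suc.IH) simp
    also have "\<dots> \<le> (i + 2) * (i + 3) * (fact (i + 1) * fact (i + 2))"
      by (intro mult_right_mono) simp_all
    also have "\<dots> = fact (Suc i + 1) * fact (Suc i + 2)" by (simp add: algebra_simps)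
    finally show ?case .
  qed (simp add: numeral_eq_Suc)
  from of_nat_mono[OF this, where 'a=real] show ?thesis unfolding of_nat_mult of_nat_fact by simp
qed

text \<open>With q = 2 x c, the n-th term
  (2x)^n phi_(n+2)(y)/(n+2)! is split into the constant term c q^n/(n+2)! of phi_(n+2)
  and the remaining terms, which by (i+2)! (n-i)! <= (n+2)! are bounded by the n-th
  Cauchy-product coefficient of u_i = (2x)^i y^(i+1)/((i+1)! (i+2)!) and q^j/j!.\<close>
lemma weight_series_term_le:
  fixes c x y :: real
  assumes c: "c \<ge> 0" and x: "x \<ge> 0" and y: "y \<ge> 0"
  shows "(2*x)^n * conv_weight c (n+2) y / fact (n+2)
     \<le> c * (2*x*c)^n / fact (n+2)
       + (\<Sum>i\<le>n. (2*x)^i * y^(i+1) / (fact (i+1) * fact (i+2)) * ((2*x*c)^(n-i) / fact (n-i)))"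
proof -
  define q where "q = 2 * x * c"
  have q: "q \<ge> 0" unfolding q_def using c x by simp
  have weight: "conv_weight c (n+2) y = c^(n+1) + (\<Sum>i<n+1. c^(n-i) * y^(i+1) / fact (i+1))"
    unfolding conv_weight_sum by (simp add: sum.lessThan_Suc_shift del: sum.lessThan_Suc)
  have split: "(2*x)^n * conv_weight c (n+2) y / fact (n+2) = (2*x)^n * c^(n+1) / fact (n+2)
      + (\<Sum>i\<le>n. (2*x)^n * c^(n-i) * y^(i+1) / (fact (i+1) * fact (n+2)))"
    unfolding weight
    by (simp add: add_divide_distrib sum_distrib_left sum_divide_distrib lessThan_Suc_atMost algebra_simps)
  have head: "(2*x)^n * c^(n+1) / fact (n+2) = c * q^n / fact (n+2)"
    unfolding q_def by (simp add: power_mult_distrib algebra_simps)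
  have tail: "(\<Sum>i\<le>n. (2*x)^n * c^(n-i) * y^(i+1) / (fact (i+1) * fact (n+2)))
      \<le> (\<Sum>i\<le>n. (2*x)^i * y^(i+1) / (fact (i+1) * fact (i+2)) * (q^(n-i) / fact (n-i)))"
  proof (rule sum_mono)
    fix i assume i: "i \<in> {..n}"
    have "i + (n - i) = n" using i by simp
    then have "(2*x)^n = (2*x)^i * (2*x)^(n-i)"
      by (simp only: power_add[symmetric])
    then have powers: "(2*x)^n * c^(n-i) = (2*x)^i * q^(n-i)"
      unfolding q_def by (simp add: power_mult_distrib)
    have "fact (i+2) * fact (n-i) \<le> (fact (n+2) :: real)"
      using fact_mult_fact_le[of "i+2" "n-i"] i by simp
    then have "fact (i+1) * (fact (i+2) * fact (n-i)) \<le> (fact (i+1) * fact (n+2) :: real)"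
      by (intro mult_left_mono) auto
    then have "(2*x)^i * q^(n-i) * y^(i+1) / (fact (i+1) * fact (n+2))
        \<le> (2*x)^i * q^(n-i) * y^(i+1) / (fact (i+1) * (fact (i+2) * fact (n-i)))"
      using x y q by (intro divide_left_mono) auto
    also have "\<dots> = (2*x)^i * y^(i+1) / (fact (i+1) * fact (i+2)) * (q^(n-i) / fact (n-i))"
      by (simp add: field_simps)
    finally show "(2*x)^n * c^(n-i) * y^(i+1) / (fact (i+1) * fact (n+2))
        \<le> (2*x)^i * y^(i+1) / (fact (i+1) * fact (i+2)) * (q^(n-i) / fact (n-i))"
      unfolding powers .
  qed
  show ?thesis using split head tail unfolding q_def by linarith
qed

text \<open>The constant terms form a series dominated by (c/2) (1/3)^n.\<close>
lemma head_series_bound: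
  fixes c q :: real
  assumes c: "c \<ge> 0" and q: "0 \<le> q" "q \<le> 1/3"
  shows "summable (\<lambda>n. c * q^n / fact (n+2)) \<and> (\<Sum>n. c * q^n / fact (n+2)) \<le> 3*c/4"
proof -
  have geom: "summable (\<lambda>n. (c/2) * (1/3::real)^n)" by (intro summable_mult summable_geometric) auto
  have le: "c * q^n / fact (n+2) \<le> (c/2) * (1/3)^n" for n
  proof -
    have "(2::real) \<le> fact (n+2)" using fact_mono[of 2 "n+2", where 'a=real] by (simp add: numeral_eq_Suc)
    then have "c * q^n / fact (n+2) \<le> c * q^n / 2" using c q by (intro divide_left_mono) auto
    also have "\<dots> \<le> c * (1/3)^n / 2" using c q by (intro divide_right_mono mult_left_mono power_mono) auto
    finally show ?thesis by simp
  qed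
  have summ: "summable (\<lambda>n. c * q^n / fact (n+2))"
    by (rule summable_comparison_test'[OF geom]) (use c q le in auto)
  have "(\<Sum>n. c * q^n / fact (n+2)) \<le> (\<Sum>n. (c/2) * (1/3::real)^n)" by (intro suminf_le summ geom le)
  also have "\<dots> = (c/2) * (\<Sum>n. (1/3::real)^n)" by (intro suminf_mult summable_geometric) auto
  also have "\<dots> = 3*c/4" by (subst suminf_geometric) auto
  finally show ?thesis using summ by simp
qed

lemma exp_sums_real: "(\<lambda>n. z^n / fact n) sums exp (z :: real)"
  using exp_converges[of z] by (simp add: divide_inverse scaleR_conv_of_real mult.commute)

text \<open>The series of the u_i: using (i+1)! (i+2)! >= 6 2^i i! for i >= 1 it is dominated by
  y/3 at i = 0 plus (y/6) times the exponential series of x y.\<close>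
lemma poly_series_bound:
  fixes x y :: real
  assumes x: "x \<ge> 0" and y: "y \<ge> 0"
  shows "summable (\<lambda>i. (2*x)^i * y^(i+1) / (fact (i+1) * fact (i+2)))
    \<and> (\<Sum>i. (2*x)^i * y^(i+1) / (fact (i+1) * fact (i+2))) \<le> y/3 + y/6 * exp (x*y)"
proof -
  define u where "u i = (2*x)^i * y^(i+1) / (fact (i+1) * fact (i+2))" for i
  define w where "w i = (if i = 0 then y/3 else 0) + (y/6) * ((x*y)^i / fact i)" for i
  have w_sums: "w sums (y/3 + (y/6) * exp (x*y))"
    unfolding w_def by (intro sums_add sums_mult exp_sums_real) (use sums_single[of 0 "\<lambda>_. y/3"] in simp)
  have u_le: "u i \<le> w i" for i
  proof (cases "i = 0")
    case False
    have "u i = (x^i * y^(i+1)) * 2^i / (fact (i+1) * fact (i+2))" unfolding u_def by (simp add: power_mult_distrib)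
    also have "\<dots> \<le> (x^i * y^(i+1)) * 2^i / (6 * 2^i * fact i)"
      using fact_Suc_mult_fact_ge[of i] False x y by (intro divide_left_mono) auto
    also have "\<dots> = (y/6) * ((x*y)^i / fact i)" by (simp add: power_mult_distrib field_simps)
    finally show ?thesis using False by (simp add: w_def)
  qed (simp add: u_def w_def)
  have summ: "summable u"
    by (rule summable_comparison_test'[OF sums_summable[OF w_sums]]) (use u_le x y in \<open>auto simp: u_def\<close>)
  have "suminf u \<le> y/3 + y/6 * exp (x*y)"
    using suminf_le[OF u_le summ sums_summable[OF w_sums]] sums_unique[OF w_sums] by simp
  then show ?thesis using summ unfolding u_def by simp
qed

text \<open>The series estimate behind the bound on exp_2^*: for 2 x c <= 1/3,
  sum_n (2x)^n phi_(n+2)(y)/(n+2)! <= 3c/4 + y/2 + y e^(x y)/4.  The Cauchy product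
  contributes at most (y/3 + (y/6) e^(x y)) e^(2 x c), and e^(2 x c) <= 3/2.\<close>
lemma weight_series_bound:
  fixes c x y :: real
  assumes c: "c \<ge> 0" and x: "x \<ge> 0" and y: "y \<ge> 0" and small: "2 * x * c \<le> 1/3"
  defines "U \<equiv> \<lambda>n. (2*x)^n * conv_weight c (n+2) y / fact (n+2)"
  shows "summable U \<and> suminf U \<le> 3*c/4 + y/2 + y * exp (x*y) / 4"
proof -
  define q where "q = 2 * x * c"
  define A where "A n = c * q^n / fact (n+2)" for n
  define u where "u i = (2*x)^i * y^(i+1) / (fact (i+1) * fact (i+2))" for i
  define v where "v j = q^j / fact j" for j
  have q: "0 \<le> q" "q \<le> 1/3" using c x small by (auto simp: q_def)
  have A: "summable A" "suminf A \<le> 3*c/4"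
    using head_series_bound[OF c q] unfolding A_def by auto
  have u: "summable u" "suminf u \<le> y/3 + y/6 * exp (x*y)"
    using poly_series_bound[OF x y] unfolding u_def by auto
  have v: "v sums exp q" unfolding v_def by (rule exp_sums_real)
  have u_nonneg: "u i \<ge> 0" and v_nonneg: "v i \<ge> 0" for i
    unfolding u_def v_def using x y q by auto
  have cauchy: "summable (\<lambda>n. \<Sum>i\<le>n. u i * v (n - i))"
      "(\<Sum>n. \<Sum>i\<le>n. u i * v (n - i)) = suminf u * suminf v"
    using summable_Cauchy_product[of u v] Cauchy_product[of u v] u sums_summable[OF v] u_nonneg v_nonneg
    by auto
  have "exp q \<le> 1 + q + q^2" using q by (intro exp_bound) auto
  also have "\<dots> \<le> 1 + 1/3 + (1/3)^2" using q by (intro add_mono power_mono) auto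
  finally have exp_q: "exp q \<le> 3/2" by (simp add: power2_eq_square)
  have "suminf u * suminf v \<le> (y/3 + y/6 * exp (x*y)) * (3/2)"
    using sums_unique[OF v] exp_q u y exp_ge_zero[of q]
    by (intro mult_mono) (auto intro: suminf_nonneg u_nonneg simp del: exp_le_cancel_iff)
  then have cauchy_le: "(\<Sum>n. \<Sum>i\<le>n. u i * v (n - i)) \<le> y/2 + y * exp (x*y) / 4"
    unfolding cauchy(2) by (simp add: field_simps)
  have U_le: "U n \<le> A n + (\<Sum>i\<le>n. u i * v (n - i))" for n
    unfolding U_def A_def u_def v_def q_def by (rule weight_series_term_le[OF c x y])
  have U_nonneg: "U n \<ge> 0" for n
    unfolding U_def using x y c by (intro divide_nonneg_pos mult_nonneg_nonneg conv_weight_nonneg) auto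
  have dom: "summable (\<lambda>n. A n + (\<Sum>i\<le>n. u i * v (n - i)))" by (intro summable_add A cauchy)
  have summ: "summable U" by (rule summable_comparison_test'[OF dom]) (use U_nonneg U_le in auto)
  have "suminf U \<le> (\<Sum>n. A n + (\<Sum>i\<le>n. u i * v (n - i)))" by (intro suminf_le summ dom U_le)
  also have "\<dots> = suminf A + (\<Sum>n. \<Sum>i\<le>n. u i * v (n - i))" by (intro suminf_add[symmetric] A cauchy)
  also have "\<dots> \<le> 3*c/4 + (y/2 + y * exp (x*y) / 4)" by (intro add_mono A cauchy_le)
  finally show ?thesis using summ by simp
qed

text \<open>The bound on exp_2^*[g] for g dominated by K exp(-a|eta|) with K/(pi a) <= 1/3: each term
  g^(*(n+2))/(n+2)! is at most (K^2/pi) exp(-a|xi|) (K/pi)^n phi_(n+2)(|xi|)/(n+2)!, and the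
  resulting series is summed by the series estimate with x = K/(2 pi) and c = 1/a.\<close>
lemma exp2_star_norm_le:
  fixes g :: "real \<Rightarrow> complex"
  assumes a: "a > 0" and K: "K \<ge> 0" and small: "K / (pi * a) \<le> 1/3"
    and g_le: "\<And>\<eta>. norm (g \<eta>) \<le> K * exp (- a * \<bar>\<eta>\<bar>)"
  shows "norm (exp2_star g \<xi>) \<le> K\<^sup>2 / pi * exp (- a * \<bar>\<xi>\<bar>) *
           (3 / (4 * a) + \<bar>\<xi>\<bar> / 2 + \<bar>\<xi>\<bar> * exp (K / (2 * pi) * \<bar>\<xi>\<bar>) / 4)"
proof -
  define x where "x = K / (2 * pi)"
  define y where "y = \<bar>\<xi>\<bar>"
  define B where "B = K\<^sup>2 / pi * exp (- a * y)"
  define U where "U n = (2*x)^n * conv_weight (1/a) (n+2) y / fact (n+2)" for n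
  have x: "x \<ge> 0" and B: "B \<ge> 0" unfolding x_def B_def using K by auto
  have "2 * x * (1/a) = K / (pi * a)" unfolding x_def by simp
  then have U: "summable U" "suminf U \<le> 3 / (4 * a) + y/2 + y * exp (x*y) / 4"
    using weight_series_bound[of "1/a" x y] a x small unfolding U_def y_def by auto
  have term_le: "norm (conv_power g (n+2) \<xi> / of_nat (fact (n+2))) \<le> B * U n" for n
  proof -
    have bound: "norm (conv_power g (n+2) \<xi>)
        \<le> K * (K / pi) ^ Suc n * exp (- a * y) * conv_weight (1/a) (n+2) y"
      unfolding y_def add_2_eq_Suc' by (rule conv_power_norm_le[OF a K g_le])
    have rearrange: "K * (K / pi) ^ Suc n * exp (- a * y) * w / F = B * ((2*x)^n * w / F)" for w F :: real
      unfolding B_def x_def by (simp add: power2_eq_square field_simps)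
    have "norm (conv_power g (n+2) \<xi> / of_nat (fact (n+2))) = norm (conv_power g (n+2) \<xi>) / fact (n+2)"
      by (simp only: norm_divide norm_of_nat of_nat_fact norm_fact)
    also have "\<dots> \<le> K * (K / pi) ^ Suc n * exp (- a * y) * conv_weight (1/a) (n+2) y / fact (n+2)"
      using bound by (rule divide_right_mono) simp
    also have "\<dots> = B * U n" unfolding U_def by (rule rearrange)
    finally show ?thesis .
  qed
  have summ_B: "summable (\<lambda>n. B * U n)" using U by (intro summable_mult) auto
  have summ: "summable (\<lambda>n. norm (conv_power g (n+2) \<xi> / of_nat (fact (n+2))))"
    by (rule summable_comparison_test'[OF summ_B]) (use term_le in auto)
  have "norm (exp2_star g \<xi>) \<le> (\<Sum>n. norm (conv_power g (n+2) \<xi> / of_nat (fact (n+2))))"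
    unfolding exp2_star_def by (rule summable_norm[OF summ])
  also have "\<dots> \<le> (\<Sum>n. B * U n)" by (intro suminf_le summ summ_B term_le)
  also have "\<dots> = B * suminf U" using U by (intro suminf_mult) auto
  also have "\<dots> \<le> B * (3 / (4 * a) + y/2 + y * exp (x*y) / 4)" using U B by (intro mult_left_mono) auto
  finally show ?thesis unfolding B_def x_def y_def by (simp add: mult_ac)
qed

text \<open>Elementary inequality comparing the collected constants with the stated bound; it uses
  only pi > 3 and e1, e2 >= 1 (they stand for exp(x y) and exp(x c)).\<close>
lemma decay_constant_le:
  fixes y c e1 e2 :: real
  assumes y: "y \<ge> 0" and c: "c \<ge> 0" and e1: "e1 \<ge> 1" and e2: "e2 \<ge> 1"
  shows "(y + 2*c) / (16*pi) + (3*c/4 + y/2 + y*e1/4) / pi \<le> (y + c) * (1/8 + 1/(2*pi) * e2 * e1)"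
proof -
  have lhs: "(y + 2*c) / (16*pi) + (3*c/4 + y/2 + y*e1/4) / pi = ((y + 2*c)/16 + (3*c/4 + y/2 + y*e1/4)) / pi"
    by (simp add: field_simps)
  have rhs: "(y + c) * (1/8 + 1/(2*pi) * e2 * e1) = ((y+c)*pi/8 + (y+c)*(e2*e1)/2) / pi"
    by (simp add: field_simps)
  have pi3: "3*(y+c) \<le> (y+c)*pi" using mult_left_mono[of 3 pi "y+c"] y c pi_gt3 by (simp add: mult.commute)
  have "e2 * e1 \<ge> e1" using e1 e2 by (metis mult_right_mono mult_1 order_trans zero_le_one)
  then have "(y+c)*(e2*e1) \<ge> (y+c)*e1" using y c by (intro mult_left_mono) auto
  moreover have "c * e1 \<ge> c" using c e1 by (simp add: mult_le_cancel_left1)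
  ultimately have exps: "(y+c)*(e2*e1) \<ge> y*e1 + c" by (simp add: algebra_simps)
  have "y*e1 \<ge> y" using y e1 by (metis mult_left_mono mult.right_neutral)
  moreover have "(y + 2*c)/16 + (3*c/4 + y/2 + R/4) \<le> P/8 + Q/2"
    if "3*(y+c) \<le> P" "R + c \<le> Q" "y \<le> R" for P Q R
    using that y by (simp add: field_simps)
  ultimately have "(y + 2*c)/16 + (3*c/4 + y/2 + y*e1/4) \<le> (y+c)*pi/8 + (y+c)*(e2*e1)/2"
    using pi3 exps by blast
  then show ?thesis unfolding lhs rhs by (intro divide_right_mono) auto
qed

lemma collect_bounds:
  fixes lam a C \<Gamma> y N E V :: real
  assumes lam: "lam > 0" and a: "a > 0" and C: "C \<ge> 0" and y: "y \<ge> 0"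
    and N: "N \<le> 1 / (2 * pi) * (C / (sqrt 2 * lam) * (C / (sqrt 2 * lam)) * exp (- a * y) * (y + 2 / a))"
    and E: "E \<le> (C / (2 * lam\<^sup>2))\<^sup>2 / pi * exp (- a * y) *
              (3 / (4 * a) + y / 2 + y * exp (C / (4 * pi * lam\<^sup>2) * y) / 4)"
    and V: "V \<le> \<Gamma> * exp (- a * y)"
  shows "1/4 * N + 4 * lam\<^sup>2 * E + V \<le> exp (- a * y) *
           (C\<^sup>2 / lam\<^sup>2 * ((1 + a * y) / a) *
              (1/8 + 1 / (2 * pi) * exp (C / (4 * pi * lam\<^sup>2 * a)) * exp (C / (4 * pi * lam\<^sup>2) * y)) + \<Gamma>)"
proof -
  define D where "D = C\<^sup>2 / lam\<^sup>2"
  define c where "c = 1 / a"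
  define x where "x = C / (4 * pi * lam\<^sup>2)"
  define e where "e = exp (- a * y)"
  define S where "S = 3*c/4 + y/2 + y * exp (x*y) / 4"
  have D: "D \<ge> 0" and c: "c \<ge> 0" and x: "x \<ge> 0" and e: "e > 0"
    unfolding D_def c_def x_def e_def using a C by auto
  have Kt_sq: "C / (sqrt 2 * lam) * (C / (sqrt 2 * lam)) = D / 2"
    unfolding D_def using lam by (simp add: field_simps power2_eq_square)
  have "1/4 * N \<le> 1/4 * (1 / (2 * pi) * (C / (sqrt 2 * lam) * (C / (sqrt 2 * lam)) * e * (y + 2 / a)))"
    unfolding e_def by (rule mult_left_mono[OF N]) simp
  also have "\<dots> = e * (D * ((y + 2*c) / (16*pi)))"
    unfolding Kt_sq c_def by (simp add: field_simps)
  finally have N': "1/4 * N \<le> e * (D * ((y + 2*c) / (16*pi)))" .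
  have "4 * lam\<^sup>2 * E \<le> 4 * lam\<^sup>2 * ((C / (2 * lam\<^sup>2))\<^sup>2 / pi * e * S)"
    using E lam unfolding e_def S_def c_def x_def by (intro mult_left_mono) (auto simp: field_simps)
  also have "\<dots> = e * (D * (S / pi))"
    unfolding D_def using lam by (simp add: field_simps power2_eq_square)
  finally have E': "4 * lam\<^sup>2 * E \<le> e * (D * (S / pi))" .
  have D_le: "D * ((y + 2*c) / (16*pi) + S / pi) \<le> D * ((y + c) * (1/8 + 1/(2*pi) * exp (x * c) * exp (x * y)))"
    unfolding S_def using y c x by (intro mult_left_mono[OF decay_constant_le D]) auto
  have collected: "e * (D * ((y + 2*c) / (16*pi))) + e * (D * (S / pi))
      \<le> e * (D * ((y + c) * (1/8 + 1/(2*pi) * exp (x * c) * exp (x * y))))"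
    using mult_left_mono[OF D_le, of e] e by (simp only: distrib_left)
  have "1/4 * N + 4 * lam\<^sup>2 * E + V \<le> e * (D * ((y + c) * (1/8 + 1/(2*pi) * exp (x * c) * exp (x * y)))) + \<Gamma> * e"
    using N' E' V collected unfolding e_def by linarith
  also have "\<dots> = exp (- a * y) * (C\<^sup>2 / lam\<^sup>2 * ((1 + a * y) / a) *
      (1/8 + 1 / (2 * pi) * exp (C / (4 * pi * lam\<^sup>2 * a)) * exp (C / (4 * pi * lam\<^sup>2) * y)) + \<Gamma>)"
  proof -
    have "(1 + a * y) / a = y + c" unfolding c_def using a by (simp add: field_simps)
    moreover have "C / (4 * pi * lam\<^sup>2 * a) = x * c" unfolding x_def c_def by simp
    moreover have "C / (4 * pi * lam\<^sup>2) * y = x * y" unfolding x_def by simp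
    ultimately show ?thesis unfolding e_def D_def by (simp only: algebra_simps)
  qed
  finally show ?thesis .
qed

lemma R_op_norm_le:
  "norm (R_op b lam v f \<xi>) \<le> 1/4 * norm (nconv (W_b_tilde b lam f) (W_b_tilde b lam f) \<xi>)
     + 4 * lam\<^sup>2 * norm (exp2_star (W_b b lam f) \<xi>) + norm (v \<xi>)"
proof -
  have "norm (R_op b lam v f \<xi>) \<le> norm ((1/4) * nconv (W_b_tilde b lam f) (W_b_tilde b lam f) \<xi>)
      + norm (complex_of_real (4 * lam\<^sup>2) * exp2_star (W_b b lam f) \<xi>) + norm (v \<xi>)"
    unfolding R_op_def by (meson norm_triangle_ineq4 norm_triangle_ineq order_trans add_mono order_refl)
  then show ?thesis by (simp only: norm_mult norm_of_real) (simp add: abs_of_nonneg)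
qed

theorem theorem7p4:
  fixes b :: "real \<Rightarrow> real" and lam \<Gamma> a C :: real and f v :: "real \<Rightarrow> complex"
  assumes b_smooth: "smooth_real b"
    and b_range: "\<And>\<xi>. 0 \<le> b \<xi> \<and> b \<xi> \<le> 1"
    and b_one: "\<And>\<xi>. \<bar>\<xi>\<bar> \<le> lam \<Longrightarrow> b \<xi> = 1"
    and b_zero: "\<And>\<xi>. \<bar>\<xi>\<bar> \<ge> sqrt 2 * lam \<Longrightarrow> b \<xi> = 0"
    and \<Gamma>_pos: "\<Gamma> > 0" and lam_pos: "lam > 0" and a_pos: "a > 0"
    and C_nonneg: "0 \<le> C" and C_less: "C < 2 * a * lam\<^sup>2"
    and f_int: "integrable lborel f"
    and f_bound: "\<And>\<xi>. \<bar>\<xi>\<bar> \<le> sqrt 2 * lam \<Longrightarrow> norm (f \<xi>) \<le> C * exp (- a * \<bar>\<xi>\<bar>)"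
    and v_int: "integrable lborel v"
    and v_bound: "\<And>\<xi>. norm (v \<xi>) \<le> \<Gamma> * exp (- a * \<bar>\<xi>\<bar>)"
  shows "\<forall>\<xi>. norm (R_op b lam v f \<xi>) \<le> exp (- a * \<bar>\<xi>\<bar>) *
           (C\<^sup>2 / lam\<^sup>2 * ((1 + a * \<bar>\<xi>\<bar>) / a) *
              (1/8 + 1 / (2 * pi) * exp (C / (4 * pi * lam\<^sup>2 * a)) * exp (C / (4 * pi * lam\<^sup>2) * \<bar>\<xi>\<bar>))
            + \<Gamma>)"
proof
  fix \<xi> :: real
  define K where "K = C / (2 * lam\<^sup>2)"
  define Kt where "Kt = C / (sqrt 2 * lam)"
  have K: "K \<ge> 0" and Kt: "Kt \<ge> 0" unfolding K_def Kt_def using C_nonneg lam_pos by auto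
  have g: "norm (W_b b lam f \<eta>) \<le> K * exp (- a * \<bar>\<eta>\<bar>)" for \<eta>
    unfolding K_def using W_b_norm_le[OF lam_pos C_nonneg b_range b_zero f_bound] .
  have gt: "norm (W_b_tilde b lam f \<eta>) \<le> Kt * exp (- a * \<bar>\<eta>\<bar>)" for \<eta>
    unfolding Kt_def using W_b_tilde_norm_le[OF lam_pos C_nonneg b_range b_zero f_bound] .
  have "K / (pi * a) = C / (2 * a * lam\<^sup>2) / pi" unfolding K_def by (simp add: field_simps)
  also have "\<dots> \<le> 1 / pi"
    using C_less lam_pos a_pos by (intro divide_right_mono) (auto simp: divide_le_eq)
  also have "\<dots> \<le> 1/3" using pi_gt3 by (simp add: field_simps)
  finally have small: "K / (pi * a) \<le> 1/3" .
  have N: "norm (nconv (W_b_tilde b lam f) (W_b_tilde b lam f) \<xi>)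
      \<le> 1 / (2 * pi) * (Kt * Kt * exp (- a * \<bar>\<xi>\<bar>) * (\<bar>\<xi>\<bar> + 2 / a))"
    using nconv_norm_le[OF a_pos _ Kt Kt gt, of 1 "W_b_tilde b lam f" \<xi>] gt by (simp add: ac_simps)
  have rate: "K / (2 * pi) = C / (4 * pi * lam\<^sup>2)" unfolding K_def by simp
  have E: "norm (exp2_star (W_b b lam f) \<xi>) \<le> K\<^sup>2 / pi * exp (- a * \<bar>\<xi>\<bar>) *
      (3 / (4 * a) + \<bar>\<xi>\<bar> / 2 + \<bar>\<xi>\<bar> * exp (C / (4 * pi * lam\<^sup>2) * \<bar>\<xi>\<bar>) / 4)"
    using exp2_star_norm_le[OF a_pos K small g, of \<xi>] unfolding rate .
  show "norm (R_op b lam v f \<xi>) \<le> exp (- a * \<bar>\<xi>\<bar>) *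
      (C\<^sup>2 / lam\<^sup>2 * ((1 + a * \<bar>\<xi>\<bar>) / a) *
        (1/8 + 1 / (2 * pi) * exp (C / (4 * pi * lam\<^sup>2 * a)) * exp (C / (4 * pi * lam\<^sup>2) * \<bar>\<xi>\<bar>)) + \<Gamma>)"
    using order_trans[OF R_op_norm_le[of b lam v f \<xi>] collect_bounds[OF lam_pos a_pos C_nonneg abs_ge_zero N[unfolded Kt_def] E[unfolded K_def] v_bound]] .
qed

end
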